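(* Let $\mathcal{U}\subseteq\mathbb{R}^K$ be convex and closed. Then the no-arbitrage subset $\mathcal{U}^{na}$ of $\mathcal{U}$ exists and equals $\mathcal{V}(\mathcal{U})\cap\mathcal{U}$, where \[\mathcal{V}(\mathcal{U})=\Big\{r\in\mathbb{R}^K:\ 0\in\mathcal{U},\ \Big(\textstyle\sum_{j=1}^ke_jr_j\in\mathcal{U}\Big)\vee\big(r_{1:k}\notin\mathcal{U}_{1:k}\big),\ \forall k=1,\dots,K-1\Big\},\] with $e_j\in\mathbb{R}^K$ the $j$-th column of the identity matrix, and $\mathcal{V}(\mathcal{U})=\emptyset$ if $0\notin\mathcal{U}$.
   Context: For $\mathcal{U}\subseteq\mathbb{R}^K$, history $\hat r_{1:k-1}\in\mathbb{R}^{k-1}$ and $1\le k\le k'\le K$, the projection is $\mathcal{U}_{k:k'}(\hat r_{1:k-1})=\{r\in\mathbb{R}^{k'-k+1}:\exists\bar r\in\mathbb{R}^{K-k'},\ [\hat r_{1:k-1};r;\bar r]\in\mathcal{U}\}$ (for $k'=K$: $[\hat r_{1:k-1};r]\in\mathcal{U}$); $\mathcal{U}_{1:k}$ denotes the projection onto the first $k$ coordinates. The worst-case risk measure with uncertainty set $\mathcal{U}$ is $\rho=\rho_0\circ\cdots\circ\rho_{K-1}$, with $\rho_k(X,r)=\sup_{r'\in\mathcal{U}:r'_{1:k}=r_{1:k}}X(r')$ if some $r'\in\mathcal{U}$ has $r'_{1:k}=r_{1:k}$, otherwise $\rho_k(X,r)=X([r_{1:k};0_{k+1:K}])$; $\rho_{k,K}=\rho_k\circ\cdots\circ\rho_{K-1}$.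 Investments $\zeta_\ell$ are functions of $r_{1:\ell}$. The set of returns with bounded conditional market risk is $\mathcal{A}(\mathcal{U})=\{r\in\mathbb{R}^K:\forall k\in\{0,\dots,K-1\},\ \inf_{\zeta_k,\dots,\zeta_{K-1}}\rho_{k,K}(-\sum_{\ell=k}^{K-1}\zeta_\ell r_{\ell+1},r)\in(-\infty,0]\}$ (here $\rho_{k,K}$ uses $\mathcal{U}$). The no-arbitrage subset $\mathcal{U}^{na}$ of $\mathcal{U}$ is the largest $\mathcal{U}'\subseteq\mathcal{U}$ with $\mathcal{U}'\subseteq\mathcal{A}(\mathcal{U}')$, i.e. $\mathcal{U}^{na}\subseteq\mathcal{A}(\mathcal{U}^{na})$ and every $\mathcal{U}'\subseteq\mathcal{U}$ with $\mathcal{U}'\subseteq\mathcal{A}(\mathcal{U}')$ satisfies $\mathcal{U}'\subseteq\mathcal{U}^{na}$. *)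

theory Defs
  imports "HOL-Analysis.Analysis"
begin

text \<open>Vectors of R^K are encoded as functions nat => real indexed by 1..K and
  vanishing outside {1..K}.\<close>

definition RK :: "nat \<Rightarrow> (nat \<Rightarrow> real) set" where
  "RK K = {r. \<forall>i. (i < 1 \<or> K < i) \<longrightarrow> r i = 0}"

text \<open>Truncation r_{1:k}, i.e. [r_{1:k}; 0] (also equal to sum_{j=1}^k e_j r_j).\<close>
definition trunc :: "nat \<Rightarrow> (nat \<Rightarrow> real) \<Rightarrow> (nat \<Rightarrow> real)" where
  "trunc k r = (\<lambda>i. if 1 \<le> i \<and> i \<le> k then r i else 0)"

definition unitv :: "nat \<Rightarrow> (nat \<Rightarrow> real)" where
  "unitv j = (\<lambda>i. if i = j then 1 else 0)"

text \<open>Projection U_{1:k} of U onto the first k coordinates (R^k embedded as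
  functions supported in {1..k}).\<close>
definition proj_first :: "(nat \<Rightarrow> real) set \<Rightarrow> nat \<Rightarrow> (nat \<Rightarrow> real) set" where
  "proj_first U k = {s. \<exists>u\<in>U. trunc k u = s}"

definition convex_set :: "(nat \<Rightarrow> real) set \<Rightarrow> bool" where
  "convex_set U \<longleftrightarrow> (\<forall>x\<in>U. \<forall>y\<in>U. \<forall>t::real. 0 \<le> t \<and> t \<le> 1 \<longrightarrow>
      (\<lambda>i. (1 - t) * x i + t * y i) \<in> U)"

definition rho :: "(nat \<Rightarrow> real) set \<Rightarrow> nat \<Rightarrow> ((nat \<Rightarrow> real) \<Rightarrow> ereal) \<Rightarrow> (nat \<Rightarrow> real) \<Rightarrow> ereal" where
  "rho U k X r =
     (if \<exists>r'\<in>U. \<forall>i\<in>{1..k}. r' i = r i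
      then (SUP r'\<in>{r'\<in>U. \<forall>i\<in>{1..k}. r' i = r i}. X r')
      else X (trunc k r))"

definition rho_from :: "(nat \<Rightarrow> real) set \<Rightarrow> nat \<Rightarrow> nat \<Rightarrow> ((nat \<Rightarrow> real) \<Rightarrow> ereal) \<Rightarrow> (nat \<Rightarrow> real) \<Rightarrow> ereal" where
  "rho_from U K k X = foldr (\<lambda>j Y. rho U j Y) [k..<K] X"

definition adapted :: "nat \<Rightarrow> nat \<Rightarrow> (nat \<Rightarrow> (nat \<Rightarrow> real) \<Rightarrow> real) \<Rightarrow> bool" where
  "adapted k K \<zeta> \<longleftrightarrow> (\<forall>l\<in>{k..<K}. \<forall>r r'. (\<forall>i\<in>{1..l}. r i = r' i) \<longrightarrow> \<zeta> l r = \<zeta> l r')"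

definition A_set :: "nat \<Rightarrow> (nat \<Rightarrow> real) set \<Rightarrow> (nat \<Rightarrow> real) set" where
  "A_set K U = {r \<in> RK K. \<forall>k<K.
     (let v = (INF \<zeta>\<in>{\<zeta>. adapted k K \<zeta>}.
                 rho_from U K k (\<lambda>r'. ereal (- (\<Sum>l\<in>{k..<K}. \<zeta> l r' * r' (l + 1)))) r)
      in -\<infinity> < v \<and> v \<le> 0)}"

definition is_no_arbitrage_subset :: "nat \<Rightarrow> (nat \<Rightarrow> real) set \<Rightarrow> (nat \<Rightarrow> real) set \<Rightarrow> bool" where
  "is_no_arbitrage_subset K U W \<longleftrightarrow>
     W \<subseteq> U \<and> W \<subseteq> A_set K W \<and> (\<forall>U'. U' \<subseteq> U \<and> U' \<subseteq> A_set K U' \<longrightarrow> U' \<subseteq> W)"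

definition V_set :: "nat \<Rightarrow> (nat \<Rightarrow> real) set \<Rightarrow> (nat \<Rightarrow> real) set" where
  "V_set K U = {r \<in> RK K. (\<lambda>_. 0) \<in> U \<and>
     (\<forall>k\<in>{1..K-1}. (\<lambda>i. \<Sum>j\<in>{1..k}. r j * unitv j i) \<in> U \<or> trunc k r \<notin> proj_first U k)}"

end

theory Submission
  imports Defs
begin

text \<open>
  Write r_{1:k} for the truncation trunc k r. For r in U, membership in V(U) says exactly that
  all truncations r_{1:k}, k = 0..K, lie in U. A set closed under truncation has bounded
  conditional risk: from any history the scenario with all future returns zero is admissible,
  so every strategy has worst-case loss at least 0, and holding nothing attains 0.

  Conversely let U' be a subset of U with U' contained in A(U'). If, after the history r_{1:k},
  all next returns in U' were at least some e > 0 (or at most -e), a large long (short)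
  position at time k would push the worst-case risk to -\<infinity>. So the next returns come
  arbitrarily close to 0 from both sides. By backward induction they are the last coordinates
  of points r'_{1:k+1} of U; the section of the closed convex set U through r_{1:k} along
  coordinate k + 1 is a closed interval containing them, hence contains 0, i.e. r_{1:k} is in U.
\<close>

definition continuations ::
    "(nat \<Rightarrow> real) set \<Rightarrow> nat \<Rightarrow> (nat \<Rightarrow> real) \<Rightarrow> (nat \<Rightarrow> real) set" where
  "continuations W k r = {r'\<in>W. \<forall>i\<in>{1..k}. r' i = r i}"

definition depends_only_on_first :: "nat \<Rightarrow> ((nat \<Rightarrow> real) \<Rightarrow> 'a) \<Rightarrow> bool" where
  "depends_only_on_first m Y \<longleftrightarrow> (\<forall>r r'. (\<forall>i\<in>{1..m}. r i = r' i) \<longrightarrow> Y r = Y r')"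

lemma trunc_trunc: "trunc k (trunc j r) = trunc (min k j) r"
  unfolding trunc_def by auto

lemma trunc_0: "trunc 0 r = (\<lambda>_. 0)"
  unfolding trunc_def by auto

lemma trunc_RK: "r \<in> RK K \<Longrightarrow> K \<le> j \<Longrightarrow> trunc j r = r"
  unfolding trunc_def RK_def by (auto simp: not_le)

lemma trunc_Suc_eq_fun_upd:
  assumes "\<forall>i\<in>{1..n}. r' i = r i"
  shows "trunc (Suc n) r' = (trunc n r)(Suc n := r' (Suc n))"
  using assms unfolding trunc_def by auto

lemma sum_unitv_eq_trunc: "(\<lambda>i. \<Sum>j\<in>{1..k}. r j * unitv j i) = trunc k r"
  unfolding unitv_def trunc_def by (auto simp: if_distrib sum.delta' cong: if_cong)

lemma rho_eq_SUP_continuations: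
  "r \<in> W \<Longrightarrow> rho W k X r = (SUP r'\<in>continuations W k r. X r')"
  unfolding rho_def continuations_def by auto

lemma rho_depends_only_on_first:
  assumes "depends_only_on_first m Y" "m \<le> k"
  shows "rho W k Y = Y"
proof
  fix r
  show "rho W k Y r = Y r"
  proof (cases "continuations W k r = {}")
    case True
    have "Y (trunc k r) = Y r"
      using assms unfolding depends_only_on_first_def trunc_def by auto
    with True show ?thesis
      unfolding rho_def continuations_def by auto
  next
    case False
    have "Y r' = Y r" if "r' \<in> continuations W k r" for r'
      using assms that unfolding depends_only_on_first_def continuations_def by auto
    then have "(SUP r'\<in>continuations W k r. Y r') = Y r"
      using False by (simp cong: SUP_cong)
    with False show ?thesis
      unfolding rho_def continuations_def by auto
  qed
qed

lemma rho_from_depends_only_on_first: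
  assumes "depends_only_on_first m Y" "m \<le> k"
  shows "rho_from W K k Y = Y"
proof -
  have "foldr (\<lambda>j Y. rho W j Y) js Y = Y" if "\<forall>j\<in>set js. m \<le> j" for js
    using that by (induction js) (simp_all add: rho_depends_only_on_first[OF assms(1)])
  with assms(2) show ?thesis
    unfolding rho_from_def by simp
qed

lemma rho_from_Suc:
  "k < K \<Longrightarrow> rho_from W K k X = rho W k (rho_from W K (Suc k) X)"
  unfolding rho_from_def by (simp add: upt_conv_Cons)

lemma rho_from_ge_trunc:
  assumes "W \<subseteq> RK K" and trunc_closed: "\<And>r j. r \<in> W \<Longrightarrow> j < K \<Longrightarrow> trunc j r \<in> W"
    and "k \<le> K" "r \<in> W"
  shows "X (trunc k r) \<le> rho_from W K k X r"
  using assms(3,4)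
proof (induction k arbitrary: r rule: inc_induct)
  case base
  then show ?case
    using assms(1) by (auto simp: rho_from_def trunc_RK)
next
  case (step j)
  have "trunc j r \<in> W"
    using trunc_closed step.hyps step.prems by blast
  then have "trunc j r \<in> continuations W j r"
    by (auto simp: continuations_def trunc_def)
  moreover have "X (trunc j r) \<le> rho_from W K (Suc j) X (trunc j r)"
    using step.IH[OF \<open>trunc j r \<in> W\<close>] by (simp add: trunc_trunc)
  ultimately have "X (trunc j r) \<le> (SUP r'\<in>continuations W j r. rho_from W K (Suc j) X r')"
    by (rule SUP_upper2[of "trunc j r"])
  also have "\<dots> = rho_from W K j X r"
    using step.hyps step.prems by (simp only: rho_from_Suc rho_eq_SUP_continuations)
  finally show ?case .
qed

lemma A_set_if_truncation_closed:
  assumes "W \<subseteq> RK K" and trunc_closed: "\<And>r j. r \<in> W \<Longrightarrow> j < K \<Longrightarrow> trunc j r \<in> W"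
  shows "W \<subseteq> A_set K W"
proof
  fix r assume r: "r \<in> W"
  define gain where "gain k \<zeta> = (\<lambda>r'. ereal (- (\<Sum>l\<in>{k..<K}. \<zeta> l r' * r' (l + 1))))"
    for k and \<zeta> :: "nat \<Rightarrow> (nat \<Rightarrow> real) \<Rightarrow> real"
  have "(INF \<zeta>\<in>{\<zeta>. adapted k K \<zeta>}. rho_from W K k (gain k \<zeta>) r) = 0" if "k < K" for k
  proof (rule antisym)
    have "adapted k K (\<lambda>_ _. 0)"
      unfolding adapted_def by simp
    moreover have "rho_from W K k (gain k (\<lambda>_ _. 0)) r = 0"
      using rho_from_depends_only_on_first[of 0 "\<lambda>_. 0 :: ereal"]
      by (simp add: gain_def depends_only_on_first_def zero_ereal_def)
    ultimately show "(INF \<zeta>\<in>{\<zeta>. adapted k K \<zeta>}. rho_from W K k (gain k \<zeta>) r) \<le> 0"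
      by (metis INF_lower2 mem_Collect_eq order.refl)
  next
    show "0 \<le> (INF \<zeta>\<in>{\<zeta>. adapted k K \<zeta>}. rho_from W K k (gain k \<zeta>) r)"
    proof (rule INF_greatest)
      fix \<zeta> :: "nat \<Rightarrow> (nat \<Rightarrow> real) \<Rightarrow> real"
      have "gain k \<zeta> (trunc k r) = 0"
        by (simp add: gain_def trunc_def zero_ereal_def)
      then show "0 \<le> rho_from W K k (gain k \<zeta>) r"
        using rho_from_ge_trunc[OF assms that[THEN less_imp_le] r] by metis
    qed
  qed
  with r assms(1) show "r \<in> A_set K W"
    unfolding A_set_def gain_def by auto
qed

definition single_position :: "nat \<Rightarrow> real \<Rightarrow> nat \<Rightarrow> (nat \<Rightarrow> real) \<Rightarrow> real" where
  "single_position k c l r = (if l = k then c else 0)"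

lemma adapted_single_position: "adapted k K (single_position k c)"
  unfolding adapted_def single_position_def by simp

lemma rho_from_single_position:
  assumes "r \<in> W" "k < K"
  shows "rho_from W K k (\<lambda>r'. ereal (- (\<Sum>l\<in>{k..<K}. single_position k c l r' * r' (l + 1)))) r
    = (SUP r'\<in>continuations W k r. ereal (- (c * r' (Suc k))))"
proof -
  have "(\<Sum>l\<in>{k..<K}. single_position k c l r' * r' (l + 1)) = c * r' (Suc k)" for r'
    using assms(2) by (simp add: single_position_def if_distrib if_distribR cong: if_cong)
  then have payoff: "(\<lambda>r'. ereal (- (\<Sum>l\<in>{k..<K}. single_position k c l r' * r' (l + 1))))
      = (\<lambda>r'. ereal (- (c * r' (Suc k))))"
    by simp
  have "depends_only_on_first (Suc k) (\<lambda>r'. ereal (- (c * r' (Suc k))))"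
    unfolding depends_only_on_first_def by auto
  then show ?thesis
    unfolding payoff rho_from_Suc[OF assms(2)] rho_eq_SUP_continuations[OF assms(1)]
    by (simp only: rho_from_depends_only_on_first[OF _ order.refl])
qed

lemma hedging_bound_imp_less:
  fixes T :: "real set"
  assumes hedge: "\<And>c. ereal m \<le> (SUP t\<in>T. ereal (- (c * t)))" and "e > 0"
  shows "\<exists>t\<in>T. t < e"
proof (rule ccontr)
  assume "\<not> (\<exists>t\<in>T. t < e)"
  then have ge: "e \<le> t" if "t \<in> T" for t
    using that by force
  define c where "c = (\<bar>m\<bar> + 1) / e"
  have "c * e = \<bar>m\<bar> + 1" "c > 0"
    using \<open>e > 0\<close> by (simp_all add: c_def)
  then have "- (c * t) \<le> - (\<bar>m\<bar> + 1)" if "t \<in> T" for t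
    using mult_left_mono[OF ge[OF that], of c] by simp
  then have "(SUP t\<in>T. ereal (- (c * t))) \<le> ereal (- (\<bar>m\<bar> + 1))"
    by (intro SUP_least) simp
  with hedge[of c] have "m \<le> - (\<bar>m\<bar> + 1)"
    using order.trans ereal_less_eq(3) by blast
  then show False
    by (simp add: abs_if split: if_splits)
qed

lemma A_set_imp_next_return_near_zero:
  assumes "r \<in> A_set K W" "r \<in> W" "k < K" "e > 0"
  shows "\<exists>r'\<in>continuations W k r. r' (Suc k) < e"
    and "\<exists>r'\<in>continuations W k r. - e < r' (Suc k)"
proof -
  define v where "v = (INF \<zeta>\<in>{\<zeta>. adapted k K \<zeta>}.
    rho_from W K k (\<lambda>r'. ereal (- (\<Sum>l\<in>{k..<K}. \<zeta> l r' * r' (l + 1)))) r)"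
  have "- \<infinity> < v" "v \<le> 0"
    using assms(1,3) unfolding A_set_def v_def Let_def by auto
  then obtain m where m: "v = ereal m"
    by (cases v) auto
  have hedge: "ereal m \<le> (SUP r'\<in>continuations W k r. ereal (- (c * r' (Suc k))))" for c
  proof -
    have "v \<le> rho_from W K k (\<lambda>r'. ereal (- (\<Sum>l\<in>{k..<K}. single_position k c l r' * r' (l + 1)))) r"
      unfolding v_def by (rule INF_lower) (simp add: adapted_single_position)
    then show ?thesis
      using m rho_from_single_position[OF assms(2,3)] by simp
  qed
  let ?T = "(\<lambda>r'. r' (Suc k)) ` continuations W k r"
  have "\<exists>t\<in>?T. t < e"
    by (rule hedging_bound_imp_less[where m = m, OF _ assms(4)]) (simp add: image_image hedge)
  then show "\<exists>r'\<in>continuations W k r. r' (Suc k) < e"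
    by auto
  have "\<exists>t\<in>uminus ` ?T. t < e"
  proof (rule hedging_bound_imp_less[where m = m, OF _ assms(4)])
    show "ereal m \<le> (SUP t\<in>uminus ` ?T. ereal (- (c * t)))" for c
      using hedge[of "- c"] by (simp add: image_image)
  qed
  then show "\<exists>r'\<in>continuations W k r. - e < r' (Suc k)"
    by (force simp: minus_less_iff)
qed

lemma closed_interval_contains_zero:
  fixes T :: "real set"
  assumes "closed T" "is_interval T"
    and near: "\<And>e. e > 0 \<Longrightarrow> (\<exists>t\<in>T. t < e) \<and> (\<exists>t\<in>T. - e < t)"
  shows "0 \<in> T"
proof (rule ccontr)
  assume "0 \<notin> T"
  moreover have "open (- T)"
    using assms(1) by (simp add: open_Compl)
  ultimately obtain e where "e > 0" and gap: "ball 0 e \<subseteq> - T"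
    by (meson ComplI open_contains_ball)
  obtain a b where "a \<in> T" "a < e" "b \<in> T" "- e < b"
    using near[OF \<open>e > 0\<close>] by blast
  moreover have "a \<notin> ball 0 e" "b \<notin> ball 0 e"
    using gap \<open>a \<in> T\<close> \<open>b \<in> T\<close> by auto
  ultimately have "a \<le> 0" "0 \<le> b"
    by (simp_all add: dist_real_def)
  with \<open>a \<in> T\<close> \<open>b \<in> T\<close> \<open>0 \<notin> T\<close> show False
    using assms(2) unfolding is_interval_1 by blast
qed

lemma closed_fun_upd_section:
  fixes U :: "(nat \<Rightarrow> real) set"
  assumes "closed U"
  shows "closed {t. x(i := t) \<in> U}"
proof -
  have "continuous_on UNIV (\<lambda>t. x(i := t))"
  proof (rule continuous_on_coordinatewise_then_product)
    show "continuous_on UNIV (\<lambda>t. (x(i := t)) j)" for j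
      by (cases "j = i") simp_all
  qed
  then show ?thesis
    using continuous_closed_vimage[OF assms, of "fun_upd x i"]
    by (simp add: continuous_on_eq_continuous_at vimage_def)
qed

lemma is_interval_fun_upd_section:
  fixes U :: "(nat \<Rightarrow> real) set"
  assumes "convex_set U"
  shows "is_interval {t. x(i := t) \<in> U}"
  unfolding is_interval_convex_1 convex_alt
proof (intro ballI allI impI, clarsimp)
  fix s t u :: real
  assume "x(i := s) \<in> U" "x(i := t) \<in> U" "0 \<le> u" "u \<le> 1"
  then have "(\<lambda>j. (1 - u) * (x(i := s)) j + u * (x(i := t)) j) \<in> U"
    using assms unfolding convex_set_def by blast
  moreover have "(\<lambda>j. (1 - u) * (x(i := s)) j + u * (x(i := t)) j) = x(i := (1 - u) * s + u * t)"
    by (auto simp: algebra_simps)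
  ultimately show "x(i := (1 - u) * s + u * t) \<in> U"
    by simp
qed

lemma trunc_in_closed_convex_if_A_set:
  assumes "U' \<subseteq> U" "U' \<subseteq> A_set K U'" "convex_set U" "closed U" "k \<le> K" "r \<in> U'"
  shows "trunc k r \<in> U"
  using assms(5,6)
proof (induction k arbitrary: r rule: inc_induct)
  case base
  have "r \<in> RK K"
    using assms(2) base unfolding A_set_def by blast
  with base assms(1) show ?case
    by (simp add: trunc_RK subset_iff)
next
  case (step j)
  define T where "T = {t. (trunc j r)(Suc j := t) \<in> U}"
  have next_returns: "r' (Suc j) \<in> T" if "r' \<in> continuations U' j r" for r'
  proof -
    have "trunc (Suc j) r' \<in> U" "trunc (Suc j) r' = (trunc j r)(Suc j := r' (Suc j))"
      using that step.IH trunc_Suc_eq_fun_upd by (auto simp: continuations_def)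
    then show ?thesis
      unfolding T_def by (metis mem_Collect_eq)
  qed
  have "(\<exists>t\<in>T. t < e) \<and> (\<exists>t\<in>T. - e < t)" if "e > 0" for e
    using A_set_imp_next_return_near_zero[OF _ step.prems step.hyps(2) that] assms(2) step.prems
      next_returns by blast
  then have "0 \<in> T"
    using closed_interval_contains_zero closed_fun_upd_section[OF assms(4)]
      is_interval_fun_upd_section[OF assms(3)] unfolding T_def by blast
  moreover have "(trunc j r)(Suc j := 0) = trunc j r"
    by (auto simp: trunc_def)
  ultimately show ?case
    by (simp add: T_def)
qed

lemma V_set_inter_eq:
  assumes "U \<subseteq> RK K"
  shows "V_set K U \<inter> U = {r \<in> U. \<forall>k\<le>K. trunc k r \<in> U}"
proof -
  have trunc_in_proj: "trunc k r \<in> proj_first U k" if "r \<in> U" for r k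
    using that unfolding proj_first_def by blast
  have "V_set K U \<inter> U = {r \<in> U. (\<lambda>_. 0) \<in> U \<and> (\<forall>k\<in>{1..K-1}. trunc k r \<in> U)}"
    using assms trunc_in_proj unfolding V_set_def sum_unitv_eq_trunc by auto
  also have "\<dots> = {r \<in> U. \<forall>k\<le>K. trunc k r \<in> U}"
  proof (rule Collect_cong, rule conj_cong[OF refl])
    fix r assume "r \<in> U"
    then have "trunc K r = r"
      using assms trunc_RK by blast
    show "(\<lambda>_. 0) \<in> U \<and> (\<forall>k\<in>{1..K-1}. trunc k r \<in> U) \<longleftrightarrow> (\<forall>k\<le>K. trunc k r \<in> U)"
    proof
      assume all: "\<forall>k\<le>K. trunc k r \<in> U"
      then have "trunc 0 r \<in> U"
        by blast
      moreover have "\<forall>k\<in>{1..K-1}. trunc k r \<in> U"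
        using all by auto
      ultimately show "(\<lambda>_. 0) \<in> U \<and> (\<forall>k\<in>{1..K-1}. trunc k r \<in> U)"
        by (simp add: trunc_0)
    next
      assume zero_and_middle: "(\<lambda>_. 0) \<in> U \<and> (\<forall>k\<in>{1..K-1}. trunc k r \<in> U)"
      show "\<forall>k\<le>K. trunc k r \<in> U"
      proof (intro allI impI)
        fix k assume "k \<le> K"
        then consider "k = 0" | "k = K" | "k \<in> {1..K-1}"
          by fastforce
        then show "trunc k r \<in> U"
          by cases
            (use zero_and_middle \<open>r \<in> U\<close> \<open>trunc K r = r\<close> in \<open>simp_all add: trunc_0\<close>)
      qed
    qed
  qed
  finally show ?thesis .
qed

theorem theorem1:
  fixes K :: nat and U :: "(nat \<Rightarrow> real) set"
  assumes "U \<subseteq> RK K"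
    and "convex_set U"
    and "closed U"
  shows "is_no_arbitrage_subset K U (V_set K U \<inter> U)"
proof -
  let ?W = "{r \<in> U. \<forall>k\<le>K. trunc k r \<in> U}"
  have "?W \<subseteq> RK K"
    using assms(1) by auto
  moreover have "trunc j r \<in> ?W" if "r \<in> ?W" "j < K" for r j
    using that by (auto simp: trunc_trunc)
  ultimately have "?W \<subseteq> A_set K ?W"
    by (rule A_set_if_truncation_closed)
  moreover have "U' \<subseteq> ?W" if "U' \<subseteq> U" "U' \<subseteq> A_set K U'" for U'
    using that trunc_in_closed_convex_if_A_set[OF that assms(2,3)] by auto
  ultimately show ?thesis
    unfolding is_no_arbitrage_subset_def V_set_inter_eq[OF assms(1)] by auto
qed

end
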